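(* Let $(A,B)$ be an $n\times n$ definite pencil with eigenvalues $\lambda_1,\dots,\lambda_n\in\mathbb{R}$. Let $0<\epsilon<\min\{\sigma_n(B),\gamma(A,B)\}$, and set $$r_\epsilon=\frac{\epsilon}{\gamma(A,B)}\left[1+\left(\frac{\|A\|_2+\epsilon}{\sigma_n(B)-\epsilon}\right)^2\right],\qquad r_i=\begin{cases}\frac1{\|B\|_2},& A=0,\\ \max\left\{\frac1{\|B\|_2},\frac{|\lambda_i|}{\|A\|_2}\right\},&\text{otherwise,}\end{cases}$$ for $1\le i\le n$. Then $$\bigcup_{i=1}^n(\lambda_i-\epsilon r_i,\lambda_i+\epsilon r_i)\subseteq\Lambda^{\mathrm{sym}}_\epsilon(A,B)\subseteq\bigcup_{i=1}^n(\lambda_i-r_\epsilon,\lambda_i+r_\epsilon).$$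
   Context: A pencil $(A,B)$ of $n\times n$ complex matrices is definite if $A,B$ are Hermitian and $\gamma(A,B)=\min_{\|x\|_2=1}|x^H(A+iB)x|>0$; its eigenvalues are the roots of $\det(A-zB)$ with multiplicity. $\sigma_n(B)$ is the smallest singular value of $B$. For $\epsilon>0$, $\Lambda^{\mathrm{sym}}_\epsilon(A,B)=\{z\in\mathbb{C}:(A+E)u=z(B+F)u$ for some $u\ne0$ and Hermitian $E,F$ with $\sqrt{\|E\|_2^2+\|F\|_2^2}\le\epsilon\}$. *)

theory Defs
  imports "HOL-Analysis.Analysis"
begin

definition hermitian :: "complex^'n^'n \<Rightarrow> bool" where
  "hermitian M \<longleftrightarrow> (\<forall>i j. M $ i $ j = cnj (M $ j $ i))"

definition qform :: "complex^'n^'n \<Rightarrow> complex^'n \<Rightarrow> complex" where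
  "qform M x = (\<Sum>i\<in>UNIV. cnj (x $ i) * (M *v x) $ i)"

definition norm2 :: "complex^'n^'n \<Rightarrow> real" where
  "norm2 M = onorm (\<lambda>x. M *v x)"

definition sigma_min :: "complex^'n^'n \<Rightarrow> real" where
  "sigma_min M = Inf {norm (M *v x) | x. norm x = 1}"

definition crawford :: "complex^'n^'n \<Rightarrow> complex^'n^'n \<Rightarrow> real" where
  "crawford A B = Inf {cmod (qform (A + mat \<i> ** B) x) | x. norm x = 1}"

definition definite_pencil :: "complex^'n^'n \<Rightarrow> complex^'n^'n \<Rightarrow> bool" where
  "definite_pencil A B \<longleftrightarrow> hermitian A \<and> hermitian B \<and> crawford A B > 0"

definition sym_pseudospectrum :: "real \<Rightarrow> complex^'n^'n \<Rightarrow> complex^'n^'n \<Rightarrow> complex set" where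
  "sym_pseudospectrum \<epsilon> A B = {z. \<exists>u E F. u \<noteq> 0 \<and> hermitian E \<and> hermitian F \<and>
      sqrt ((norm2 E)\<^sup>2 + (norm2 F)\<^sup>2) \<le> \<epsilon> \<and> (A + E) *v u = z *s ((B + F) *v u)}"

end

(*
  If (A + E) u = z (B + F) u with sqrt (|E|^2 + |F|^2) <= eps < gamma(A,B), then
  u^H (B + F) u is nonzero, for otherwise |u^H (A + iB) u| <= eps |u|^2. Hence z = x is real, and the
  residual satisfies |(A - x B) u| <= sqrt (1 + x^2) eps |u|. The point of the numerical range of
  A + iB closest to 0 is a supporting point, so some rotation P = s A + c B is >= gamma I. The
  Hermitian pencil (A - x B, P) then has a real eigenvalue mu with gamma |mu| |v| <= |(A - x B) v|
  for all v (minimise the P-Rayleigh quotient of the square of P^-1 (A - x B)), and mu comes from an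
  eigenvalue lam_i with |lam_i - x| <= |mu| sqrt (1 + lam_i^2). Both |lam_i| and |x| are bounded by
  (|A| + eps) / (sigma_n(B) - eps), which turns the product of the two chordal factors into r_eps.

  For A y = lam_i B y with |y| = 1 and x near lam_i, the residual
  v = (x - lam_i) B y has y^H v real and |v| <= eps, and a scaled Householder reflection is a
  Hermitian E with E y = v and |E| = |v|.
*)

theory Submission
  imports Defs
begin

section \<open>Inner products, Hermitian matrices and quadratic forms\<close>

definition cinner :: "complex^'n \<Rightarrow> complex^'n \<Rightarrow> complex" where
  "cinner x y = (\<Sum>i\<in>UNIV. cnj (x $ i) * y $ i)"

lemma qform_eq_cinner: "qform M x = cinner x (M *v x)"
  by (simp add: qform_def cinner_def)

lemma cinner_add_left: "cinner (x + y) z = cinner x z + cinner y z"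
  by (simp add: cinner_def distrib_right sum.distrib)

lemma cinner_add_right: "cinner x (y + z) = cinner x y + cinner x z"
  by (simp add: cinner_def distrib_left sum.distrib)

lemma cinner_diff_left: "cinner (x - y) z = cinner x z - cinner y z"
  by (simp add: cinner_def left_diff_distrib sum_subtractf)

lemma cinner_diff_right: "cinner x (y - z) = cinner x y - cinner x z"
  by (simp add: cinner_def right_diff_distrib sum_subtractf)

lemma cinner_scale_left: "cinner (c *s x) y = cnj c * cinner x y"
  by (simp add: cinner_def sum_distrib_left algebra_simps)

lemma cinner_scale_right: "cinner x (c *s y) = c * cinner x y"
  by (simp add: cinner_def sum_distrib_left algebra_simps)

lemma cinner_zero_left [simp]: "cinner 0 x = 0"
  and cinner_zero_right [simp]: "cinner x 0 = 0"
  by (simp_all add: cinner_def)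

lemma complex_mult_cnj_self: "cnj z * z = of_real ((cmod z)\<^sup>2)"
  by (metis complex_norm_square mult.commute of_real_power)

lemma cnj_cinner: "cnj (cinner x y) = cinner y x"
  by (simp add: cinner_def mult.commute)

lemma cinner_self: "cinner x x = of_real ((norm x)\<^sup>2)"
proof -
  have "cinner x x = (\<Sum>i\<in>UNIV. of_real ((cmod (x $ i))\<^sup>2))"
    unfolding cinner_def by (simp add: complex_mult_cnj_self)
  then show ?thesis
    by (simp add: norm_vec_def L2_set_def sum_nonneg)
qed

lemma Re_cinner: "Re (cinner x y) = inner x y"
  by (simp add: cinner_def inner_vec_def Re_sum inner_complex_def)

lemma norm_vector_smult: "norm (c *s x) = cmod c * norm (x :: complex^'n)"
  by (simp add: norm_vec_def L2_set_def norm_mult power_mult_distrib real_sqrt_mult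
      flip: sum_distrib_left)

lemma cinner_Cauchy_Schwarz: "cmod (cinner x y) \<le> norm x * norm y"
proof (cases "cinner x y = 0")
  case False
  define w where "w = cnj (cinner x y) / cmod (cinner x y)"
  have "cinner x (w *s y) = of_real (cmod (cinner x y))"
    using False by (simp add: w_def cinner_scale_right power2_eq_square mult.commute
        flip: complex_norm_square)
  then have "cmod (cinner x y) = inner x (w *s y)"
    by (metis Re_cinner Re_complex_of_real)
  also have "\<dots> \<le> norm x * norm (w *s y)"
    by (rule norm_cauchy_schwarz)
  also have "\<dots> = norm x * norm y"
    using False by (simp add: w_def norm_vector_smult norm_divide)
  finally show ?thesis .
qed simp

lemma norm_add_sq_orthogonal:
  assumes "cinner x y = 0"
  shows "(norm (x + y))\<^sup>2 = (norm x)\<^sup>2 + (norm y)\<^sup>2"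
proof -
  have "cinner y x = 0"
    using assms by (metis cnj_cinner complex_cnj_zero)
  then have "cinner (x + y) (x + y) = cinner x x + cinner y y"
    using assms by (simp add: cinner_add_left cinner_add_right)
  then have "of_real ((norm (x + y))\<^sup>2) = (of_real ((norm x)\<^sup>2 + (norm y)\<^sup>2) :: complex)"
    by (simp add: cinner_self)
  then show ?thesis
    by (simp only: of_real_eq_iff)
qed

lemma norm_normalize: "x \<noteq> 0 \<Longrightarrow> norm (of_real (1 / norm x) *s x) = 1"
  for x :: "complex^'n"
  by (simp add: norm_vector_smult norm_divide)

lemma matrix_vector_mult_smult: "M *v (c *s x) = c *s (M *v x)"
  for M :: "complex^'n^'n"
  by (simp add: vec_eq_iff matrix_vector_mult_def sum_distrib_left mult.left_commute)

lemma mat_matrix_vector_mult: "(mat c ** M) *v x = c *s (M *v x)"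
  for M :: "complex^'n^'n"
  by (simp add: vec_eq_iff matrix_vector_mult_def matrix_matrix_mult_def mat_def
      sum_distrib_left if_distrib[of "\<lambda>a. a * _"] mult.assoc cong: if_cong)

lemma det_eq_0_iff_kernel: "det M = 0 \<longleftrightarrow> (\<exists>x. x \<noteq> 0 \<and> M *v x = 0)"
  for M :: "complex^'n^'n"
  by (metis invertible_det_nz invertible_left_inverse matrix_left_invertible_ker)

lemma mat_matrix_mult_component: "(mat c ** M) $ i $ j = c * M $ i $ j"
  for M :: "complex^'n^'n"
  by (simp add: matrix_matrix_mult_def mat_def if_distrib[of "\<lambda>a. a * _"] cong: if_cong)

lemma pencil_residual: "(A - mat z ** B) *v y = A *v y - z *s (B *v y)"
  for A B :: "complex^'n^'n"
  by (simp add: matrix_vector_mult_diff_rdistrib mat_matrix_vector_mult)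

lemma hermitian_iff_cnj: "hermitian M \<longleftrightarrow> (\<forall>i j. cnj (M $ i $ j) = M $ j $ i)"
  unfolding hermitian_def by (metis complex_cnj_cnj)

lemma hermitian_cinner:
  assumes "hermitian M"
  shows "cinner x (M *v y) = cinner (M *v x) y"
proof -
  have M: "cnj (M $ i $ j) = M $ j $ i" for i j
    using assms by (simp add: hermitian_iff_cnj)
  have "cinner x (M *v y) = (\<Sum>j\<in>UNIV. \<Sum>i\<in>UNIV. cnj (x $ i) * M $ i $ j * y $ j)"
    unfolding cinner_def matrix_vector_mult_def
    by (simp add: sum_distrib_left mult.assoc) (rule sum.swap)
  also have "\<dots> = cinner (M *v x) y"
    unfolding cinner_def matrix_vector_mult_def cnj_sum sum_distrib_right
    by (simp add: M sum_distrib_left mult_ac)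
  finally show ?thesis .
qed

lemma hermitian_add: "hermitian A \<Longrightarrow> hermitian B \<Longrightarrow> hermitian (A + B)"
  by (simp add: hermitian_iff_cnj)

lemma hermitian_diff: "hermitian A \<Longrightarrow> hermitian B \<Longrightarrow> hermitian (A - B)"
  by (simp add: hermitian_iff_cnj)

lemma hermitian_mat_of_real_mult: "hermitian A \<Longrightarrow> hermitian (mat (of_real r) ** A)"
  by (simp add: hermitian_iff_cnj mat_matrix_mult_component)

lemma hermitian_zero: "hermitian 0"
  by (simp add: hermitian_def)

lemma qform_hermitian_real:
  assumes "hermitian M"
  shows "qform M x = of_real (Re (qform M x))"
proof -
  have "cnj (qform M x) = qform M x"
    by (simp add: qform_eq_cinner cnj_cinner hermitian_cinner[OF assms])
  then have "Im (qform M x) = 0"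
    by (metis cnj.sel(2) neg_equal_zero)
  then show ?thesis
    by (simp add: complex_eq_iff)
qed

lemma Re_cinner_hermitian_commute:
  assumes "hermitian M"
  shows "Re (cinner x (M *v y)) = Re (cinner y (M *v x))"
proof -
  have "cinner x (M *v y) = cnj (cinner y (M *v x))"
    by (simp only: hermitian_cinner[OF assms] cnj_cinner)
  then show ?thesis
    by simp
qed

lemma qform_scale: "qform M (c *s x) = of_real ((cmod c)\<^sup>2) * qform M x"
proof -
  have "qform M (c *s x) = (cnj c * c) * qform M x"
    by (simp add: qform_eq_cinner cinner_scale_left cinner_scale_right matrix_vector_mult_smult)
  then show ?thesis
    by (simp only: complex_mult_cnj_self)
qed

lemma qform_add_vector:
  "qform M (x + y) = qform M x + cinner x (M *v y) + cinner y (M *v x) + qform M y"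
  by (simp add: qform_eq_cinner matrix_vector_right_distrib cinner_add_left cinner_add_right)

lemma qform_add_matrix: "qform (A + B) x = qform A x + qform B x"
  by (simp add: qform_eq_cinner matrix_vector_mult_add_rdistrib cinner_add_right)

lemma qform_mat_mult: "qform (mat c ** A) x = c * qform A x"
  by (simp add: qform_eq_cinner mat_matrix_vector_mult cinner_scale_right)

lemma continuous_on_qform [continuous_intros]:
  assumes "continuous_on S f"
  shows "continuous_on S (\<lambda>x. qform M (f x))"
proof -
  have "continuous_on UNIV (qform M)"
    unfolding qform_def matrix_vector_mult_def
    by (intro continuous_intros linear_continuous_on bounded_linear_vec_nth)
  then show ?thesis
    using assms by (rule continuous_on_compose2) auto
qed

lemma norm2_bound: "norm (M *v x) \<le> norm2 M * norm x"
  unfolding norm2_def by (rule onorm) simp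

lemma norm2_nonneg: "0 \<le> norm2 M"
  unfolding norm2_def by (rule onorm_pos_le) simp

lemma norm2_le: "(\<And>x. norm (M *v x) \<le> b * norm x) \<Longrightarrow> norm2 M \<le> b"
  unfolding norm2_def by (rule onorm_le)

lemma norm2_zero [simp]: "norm2 0 = 0"
  by (intro antisym norm2_le norm2_nonneg) simp

lemma qform_norm2_bound: "cmod (qform M x) \<le> norm2 M * (norm x)\<^sup>2"
proof -
  have "cmod (qform M x) \<le> norm x * norm (M *v x)"
    unfolding qform_eq_cinner by (rule cinner_Cauchy_Schwarz)
  also have "\<dots> \<le> norm x * (norm2 M * norm x)"
    by (intro mult_left_mono norm2_bound) auto
  finally show ?thesis
    by (simp add: power2_eq_square mult_ac)
qed

lemma Inf_unit_sphere_homogeneous_le: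
  fixes f :: "complex^'n \<Rightarrow> real"
  assumes nonneg: "\<And>x. 0 \<le> f x" and homog: "\<And>c x. f (c *s x) = cmod c ^ k * f x" and "0 < k"
  shows "Inf {f x | x. norm x = 1} * norm x ^ k \<le> f x"
proof (cases "x = 0")
  case True
  then show ?thesis
    using nonneg \<open>0 < k\<close> by (simp add: zero_power)
next
  case False
  define u where "u = of_real (1 / norm x) *s x"
  have "Inf {f x | x. norm x = 1} \<le> f u"
    using norm_normalize[OF False] nonneg
    by (intro cInf_lower bdd_belowI[where m = 0]) (auto simp: u_def)
  also have "f u = f x / norm x ^ k"
    using False by (simp add: u_def homog norm_divide power_one_over)
  finally show ?thesis
    using False by (simp add: pos_le_divide_eq)
qed

lemma sigma_min_bound: "sigma_min B * norm x \<le> norm (B *v x)"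
  using Inf_unit_sphere_homogeneous_le[of "\<lambda>x. norm (B *v x)" 1 x]
  by (simp add: sigma_min_def matrix_vector_mult_smult norm_vector_smult)

lemma crawford_bound: "crawford A B * (norm x)\<^sup>2 \<le> cmod (qform (A + mat \<i> ** B) x)"
  using Inf_unit_sphere_homogeneous_le[of "\<lambda>x. cmod (qform (A + mat \<i> ** B) x)" 2 x]
  by (simp add: crawford_def qform_scale norm_mult norm_power)

lemma sigma_min_pos_det_nonzero:
  assumes "0 < sigma_min B"
  shows "det B \<noteq> 0"
proof
  assume "det B = 0"
  then obtain x where "x \<noteq> 0" and "B *v x = 0"
    by (auto simp: det_eq_0_iff_kernel)
  then show False
    using sigma_min_bound[of B x] assms by (simp add: mult_le_0_iff)
qed

lemma crawford_attained: "\<exists>x. norm x = 1 \<and> cmod (qform (A + mat \<i> ** B) x) = crawford A B"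
proof -
  let ?f = "\<lambda>x. cmod (qform (A + mat \<i> ** B) x)"
  have "continuous_on (sphere 0 1) ?f"
    by (intro continuous_intros)
  moreover have "sphere (0 :: complex^'n) 1 \<noteq> {}"
    by simp
  ultimately obtain x where x: "x \<in> sphere 0 1" and min: "\<forall>y \<in> sphere 0 1. ?f x \<le> ?f y"
    using continuous_attains_inf[OF compact_sphere] by blast
  have "crawford A B = ?f x"
    unfolding crawford_def using x min by (intro cInf_eq_minimum) auto
  then show ?thesis
    using x by auto
qed

lemma cubic_nonneg_at_right_imp:
  fixes a b c d :: real
  assumes nonneg: "\<And>t. 0 < t \<Longrightarrow> 0 \<le> a + b * t + c * t\<^sup>2 + d * t ^ 3"
  shows "0 \<le> a"
proof -
  have "((\<lambda>t. a + b * t + c * t\<^sup>2 + d * t ^ 3) \<longlongrightarrow> a + b * 0 + c * 0\<^sup>2 + d * 0 ^ 3) (at_right 0)"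
    by (intro tendsto_intros)
  then have lim: "((\<lambda>t. a + b * t + c * t\<^sup>2 + d * t ^ 3) \<longlongrightarrow> a) (at_right 0)"
    by simp
  have "eventually (\<lambda>t. 0 \<le> a + b * t + c * t\<^sup>2 + d * t ^ 3) (at_right 0)"
    using nonneg by (intro eventually_at_rightI[of 0 1]) auto
  then show ?thesis
    using tendsto_lowerbound[OF lim] by simp
qed

lemma quartic_nonneg_low_coeffs:
  fixes c1 c2 c3 c4 :: real
  assumes nonneg: "\<And>t. 0 \<le> c1 * t + c2 * t\<^sup>2 + c3 * t ^ 3 + c4 * t ^ 4"
  shows "c1 = 0" and "0 \<le> c2"
proof -
  have expand: "c1 * t + c2 * t\<^sup>2 + c3 * t ^ 3 + c4 * t ^ 4
      = t * (c1 + c2 * t + c3 * t\<^sup>2 + c4 * t ^ 3)" for t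
    by (simp add: algebra_simps power2_eq_square power3_eq_cube power4_eq_xxxx)
  have "0 \<le> c1"
  proof (rule cubic_nonneg_at_right_imp)
    fix t :: real
    assume "0 < t"
    then show "0 \<le> c1 + c2 * t + c3 * t\<^sup>2 + c4 * t ^ 3"
      using nonneg[of t] unfolding expand by (simp add: zero_le_mult_iff)
  qed
  moreover have "0 \<le> - c1"
  proof (rule cubic_nonneg_at_right_imp)
    fix t :: real
    assume "0 < t"
    show "0 \<le> - c1 + c2 * t + (- c3) * t\<^sup>2 + c4 * t ^ 3"
    proof -
      have "0 \<le> (- t) * (c1 + c2 * (- t) + c3 * (- t)\<^sup>2 + c4 * (- t) ^ 3)"
        using nonneg[of "- t"] unfolding expand .
      then have "c1 + c2 * (- t) + c3 * (- t)\<^sup>2 + c4 * (- t) ^ 3 \<le> 0"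
        using \<open>0 < t\<close> by (auto simp: mult_le_0_iff)
      then show ?thesis
        by simp
    qed
  qed
  ultimately show "c1 = 0"
    by simp
  show "0 \<le> c2"
  proof (rule cubic_nonneg_at_right_imp)
    fix t :: real
    assume "0 < t"
    have "c1 * t + c2 * t\<^sup>2 + c3 * t ^ 3 + c4 * t ^ 4 = t\<^sup>2 * (c2 + c3 * t + c4 * t\<^sup>2 + 0 * t ^ 3)"
      using \<open>c1 = 0\<close> by (simp add: algebra_simps power2_eq_square power3_eq_cube power4_eq_xxxx)
    then show "0 \<le> c2 + c3 * t + c4 * t\<^sup>2 + 0 * t ^ 3"
      using nonneg[of t] \<open>0 < t\<close> by (simp add: zero_le_mult_iff)
  qed
qed

lemma Cauchy_Schwarz_pair: "\<bar>a * b + c * d\<bar> \<le> sqrt (a\<^sup>2 + c\<^sup>2) * sqrt (b\<^sup>2 + d\<^sup>2)"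
  for a b c d :: real
proof -
  have "(a * b + c * d)\<^sup>2 \<le> (a\<^sup>2 + c\<^sup>2) * (b\<^sup>2 + d\<^sup>2)"
    using zero_le_power2[of "a * d - b * c"] by (simp add: power2_eq_square algebra_simps)
  then have "sqrt ((a * b + c * d)\<^sup>2) \<le> sqrt ((a\<^sup>2 + c\<^sup>2) * (b\<^sup>2 + d\<^sup>2))"
    by (rule real_sqrt_le_mono)
  then show ?thesis
    by (simp add: real_sqrt_mult)
qed

lemma sqrt_one_plus_square_mult_less:
  fixes l x M :: real
  assumes "\<bar>l\<bar> < M" and "\<bar>x\<bar> \<le> M"
  shows "sqrt (1 + l\<^sup>2) * sqrt (1 + x\<^sup>2) < 1 + M\<^sup>2"
proof -
  have "sqrt (1 + l\<^sup>2) < sqrt (1 + M\<^sup>2)"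
    using power_strict_mono[OF assms(1) abs_ge_zero, of 2] by simp
  moreover have "sqrt (1 + x\<^sup>2) \<le> sqrt (1 + M\<^sup>2)"
    using power_mono[OF assms(2) abs_ge_zero, of 2] by simp
  ultimately have "sqrt (1 + l\<^sup>2) * sqrt (1 + x\<^sup>2) < sqrt (1 + M\<^sup>2) * sqrt (1 + M\<^sup>2)"
    by (intro mult_less_le_imp_less) (auto simp: add_pos_nonneg)
  then show ?thesis
    by (simp add: add_pos_nonneg)
qed

section \<open>The closest point of a numerical range to the origin\<close>

lemma quadratic_curve_outside_circle:
  fixes w p q :: complex and n :: real
  assumes outside: "\<And>t::real. (cmod w)\<^sup>2 * (1 + t\<^sup>2 * n)\<^sup>2 \<le> (cmod (w + of_real t * p + of_real (t\<^sup>2) * q))\<^sup>2"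
  shows "Re (cnj w * p) = 0" and "0 \<le> (cmod p)\<^sup>2 + 2 * Re (cnj w * q) - 2 * (cmod w)\<^sup>2 * n"
proof -
  let ?c1 = "2 * Re (cnj w * p)"
  let ?c2 = "(cmod p)\<^sup>2 + 2 * Re (cnj w * q) - 2 * (cmod w)\<^sup>2 * n"
  let ?c3 = "2 * Re (cnj p * q)"
  let ?c4 = "(cmod q)\<^sup>2 - (cmod w)\<^sup>2 * n\<^sup>2"
  have expand: "(cmod (w + of_real t * p + of_real (t\<^sup>2) * q))\<^sup>2 - (cmod w)\<^sup>2 * (1 + t\<^sup>2 * n)\<^sup>2
      = ?c1 * t + ?c2 * t\<^sup>2 + ?c3 * t ^ 3 + ?c4 * t ^ 4" for t
    unfolding cmod_power2 by (simp add: power2_eq_square power3_eq_cube power4_eq_xxxx algebra_simps)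
  have "0 \<le> ?c1 * t + ?c2 * t\<^sup>2 + ?c3 * t ^ 3 + ?c4 * t ^ 4" for t
    using expand[of t] outside[of t] by linarith
  from quartic_nonneg_low_coeffs[OF this] show "Re (cnj w * p) = 0" and "0 \<le> ?c2"
    by simp_all
qed

lemma exists_unimodular_real_multiple: "\<exists>\<omega>. cmod \<omega> = 1 \<and> Im (\<omega> * d) = 0"
proof (cases "d = 0")
  case False
  have "Im (cnj d / of_real (cmod d) * d) = 0"
    by (simp add: field_simps)
  then show ?thesis
    using False by (intro exI[of _ "cnj d / of_real (cmod d)"]) (simp add: norm_divide)
qed (auto intro: exI[of _ 1])

context
  fixes H :: "complex^'n^'n" and x0 :: "complex^'n"
  assumes unit: "norm x0 = 1"
    and nearest: "\<And>x. cmod (qform H x0) * (norm x)\<^sup>2 \<le> cmod (qform H x)"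
begin

text \<open>First- and second-order conditions for the minimum of \<open>\<bar>x\<^sup>H H x\<bar> / \<parallel>x\<parallel>\<^sup>2\<close>
  at \<open>x0\<close>, along the curve \<open>x0 + t h\<close> with \<open>h \<bottom> x0\<close>.\<close>

lemma nearest_point_orthogonal_conditions:
  assumes orth: "cinner x0 h = 0"
  shows "Re (cnj (qform H x0) * (cinner x0 (H *v h) + cinner h (H *v x0))) = 0"
    and "0 \<le> (cmod (cinner x0 (H *v h) + cinner h (H *v x0)))\<^sup>2
              + 2 * Re (cnj (qform H x0) * qform H h) - 2 * (cmod (qform H x0))\<^sup>2 * (norm h)\<^sup>2"
proof -
  let ?w = "qform H x0" and ?p = "cinner x0 (H *v h) + cinner h (H *v x0)"
  have "(cmod ?w)\<^sup>2 * (1 + t\<^sup>2 * (norm h)\<^sup>2)\<^sup>2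
      \<le> (cmod (?w + of_real t * ?p + of_real (t\<^sup>2) * qform H h))\<^sup>2" for t
  proof -
    define x where "x = x0 + of_real t *s h"
    have "(norm x)\<^sup>2 = 1 + t\<^sup>2 * (norm h)\<^sup>2"
      using norm_add_sq_orthogonal[of x0 "of_real t *s h"] orth unit
      by (simp add: x_def cinner_scale_right norm_vector_smult power_mult_distrib)
    moreover have "qform H x = ?w + of_real t * ?p + of_real (t\<^sup>2) * qform H h"
      by (simp add: x_def qform_add_vector qform_scale cinner_scale_left cinner_scale_right
          matrix_vector_mult_smult algebra_simps)
    moreover have "(cmod ?w * (norm x)\<^sup>2)\<^sup>2 \<le> (cmod (qform H x))\<^sup>2"
      using nearest by (rule power_mono) simp
    ultimately show ?thesis
      by (simp add: power_mult_distrib)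
  qed
  then show "Re (cnj ?w * ?p) = 0"
    and "0 \<le> (cmod ?p)\<^sup>2 + 2 * Re (cnj ?w * qform H h) - 2 * (cmod ?w)\<^sup>2 * (norm h)\<^sup>2"
    by (rule quadratic_curve_outside_circle)+
qed

lemma nearest_point_halfplane_orthogonal:
  assumes nonzero: "qform H x0 \<noteq> 0" and orth: "cinner x0 h = 0"
  shows "(cmod (qform H x0))\<^sup>2 * (norm h)\<^sup>2 \<le> Re (cnj (qform H x0) * qform H h)"
proof -
  let ?w = "qform H x0"
  define u where "u = cnj ?w * cinner x0 (H *v h)"
  define v where "v = cnj ?w * cinner h (H *v x0)"
  obtain \<omega> where \<omega>: "cmod \<omega> = 1" and real: "Im (\<omega> * (u - cnj v)) = 0"
    using exists_unimodular_real_multiple by blast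
  define h' where "h' = \<omega> *s h"
  have orth': "cinner x0 h' = 0"
    using orth by (simp add: h'_def cinner_scale_right)
  have p': "cnj ?w * (cinner x0 (H *v h') + cinner h' (H *v x0)) = \<omega> * u + cnj \<omega> * v"
    by (simp add: h'_def u_def v_def matrix_vector_mult_smult cinner_scale_left cinner_scale_right
        algebra_simps)
  \<comment> \<open>the phase \<omega> makes the first-order term real, and the first-order condition makes it vanish\<close>
  have "Re (\<omega> * u + cnj \<omega> * v) = 0"
    using nearest_point_orthogonal_conditions(1)[OF orth'] unfolding p' .
  moreover have "Im (\<omega> * u + cnj \<omega> * v) = 0"
    using real by (simp add: algebra_simps)
  ultimately have "cnj ?w * (cinner x0 (H *v h') + cinner h' (H *v x0)) = 0"
    unfolding p' by (simp add: complex_eq_iff)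
  then have "cinner x0 (H *v h') + cinner h' (H *v x0) = 0"
    using nonzero by simp
  moreover have "qform H h' = qform H h" and "norm h' = norm h"
    using \<omega> by (simp_all add: h'_def qform_scale norm_vector_smult)
  ultimately show ?thesis
    using nearest_point_orthogonal_conditions(2)[OF orth'] by simp
qed

lemma nearest_point_halfplane:
  assumes nonzero: "qform H x0 \<noteq> 0"
  shows "(cmod (qform H x0))\<^sup>2 * (norm y)\<^sup>2 \<le> Re (cnj (qform H x0) * qform H y)"
proof -
  let ?w = "qform H x0"
  define \<alpha> where "\<alpha> = cinner x0 y"
  define y' where "y' = y - \<alpha> *s x0"
  have x0x0: "cinner x0 x0 = 1"
    using unit by (simp add: cinner_self)
  have orth: "cinner x0 y' = 0"
    by (simp add: y'_def \<alpha>_def cinner_diff_right cinner_scale_right x0x0)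
  have y: "y = \<alpha> *s x0 + y'"
    by (simp add: y'_def)
  have cross: "Re (cnj ?w * (cnj \<alpha> * cinner x0 (H *v y') + \<alpha> * cinner y' (H *v x0))) = 0"
    using nearest_point_orthogonal_conditions(1)[of "cnj \<alpha> *s y'"] orth
    by (simp add: cinner_scale_left cinner_scale_right matrix_vector_mult_smult)
  have "qform H y = of_real ((cmod \<alpha>)\<^sup>2) * ?w
      + (cnj \<alpha> * cinner x0 (H *v y') + \<alpha> * cinner y' (H *v x0)) + qform H y'"
    by (subst y) (simp add: qform_add_vector qform_scale cinner_scale_left cinner_scale_right
        matrix_vector_mult_smult)
  then have "cnj ?w * qform H y = of_real ((cmod \<alpha>)\<^sup>2 * (cmod ?w)\<^sup>2)
      + cnj ?w * (cnj \<alpha> * cinner x0 (H *v y') + \<alpha> * cinner y' (H *v x0)) + cnj ?w * qform H y'"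
    by (simp add: distrib_left mult.left_commute[of "cnj ?w"] complex_mult_cnj_self)
  then have "Re (cnj ?w * qform H y) = (cmod \<alpha>)\<^sup>2 * (cmod ?w)\<^sup>2 + Re (cnj ?w * qform H y')"
    using cross by simp
  moreover have "(cmod ?w)\<^sup>2 * (norm y')\<^sup>2 \<le> Re (cnj ?w * qform H y')"
    by (rule nearest_point_halfplane_orthogonal[OF nonzero orth])
  moreover have "(norm y)\<^sup>2 = (cmod \<alpha>)\<^sup>2 + (norm y')\<^sup>2"
    using norm_add_sq_orthogonal[of "\<alpha> *s x0" y'] orth unit
    by (simp add: y[symmetric] cinner_scale_left norm_vector_smult power_mult_distrib)
  ultimately show ?thesis
    by (simp add: algebra_simps)
qed

end

lemma definite_pencil_rotation:
  assumes hA: "hermitian A" and hB: "hermitian B" and pos: "0 < crawford A B"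
  obtains s c where "s\<^sup>2 + c\<^sup>2 = 1"
    and "\<And>y. crawford A B * (norm y)\<^sup>2 \<le> Re (qform (mat (of_real s) ** A + mat (of_real c) ** B) y)"
proof -
  let ?H = "A + mat \<i> ** B" and ?\<gamma> = "crawford A B"
  obtain x0 where x0: "norm x0 = 1" and cmod_w: "cmod (qform ?H x0) = ?\<gamma>"
    using crawford_attained by blast
  have nearest: "cmod (qform ?H x0) * (norm x)\<^sup>2 \<le> cmod (qform ?H x)" for x
    using crawford_bound cmod_w by simp
  define w where "w = qform ?H x0"
  have w: "cmod w = ?\<gamma>"
    using cmod_w by (simp add: w_def)
  then have "w \<noteq> 0"
    using pos by auto
  then have halfplane: "?\<gamma>\<^sup>2 * (norm y)\<^sup>2 \<le> Re (cnj w * qform ?H y)" for y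
    using nearest_point_halfplane[OF x0 nearest] w by (simp add: w_def)
  define s c where "s = Re w / ?\<gamma>" and "c = Im w / ?\<gamma>"
  show thesis
  proof
    have "(Re w)\<^sup>2 + (Im w)\<^sup>2 = ?\<gamma>\<^sup>2"
      using w cmod_power2[of w] by simp
    then show "s\<^sup>2 + c\<^sup>2 = 1"
      using pos by (simp add: s_def c_def power_divide add_divide_distrib[symmetric])
  next
    fix y
    obtain a b where a: "qform A y = of_real a" and b: "qform B y = of_real b"
      using qform_hermitian_real[OF hA] qform_hermitian_real[OF hB] by blast
    let ?P = "mat (of_real s) ** A + mat (of_real c) ** B"
    have "Re (cnj w * qform ?H y) = Re w * a + Im w * b"
      by (simp add: qform_add_matrix qform_mat_mult a b)
    also have "\<dots> = ?\<gamma> * Re (qform ?P y)"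
      using pos by (simp add: qform_add_matrix qform_mat_mult a b s_def c_def field_simps)
    finally show "?\<gamma> * (norm y)\<^sup>2 \<le> Re (qform ?P y)"
      using halfplane[of y] pos by (simp add: power2_eq_square mult.assoc)
  qed
qed

section \<open>Pencils with a positive definite part\<close>

lemma Re_qform_add_scaled:
  assumes "hermitian M"
  shows "Re (qform M (x + of_real t *s h))
    = Re (qform M x) + t * (2 * Re (cinner h (M *v x))) + t\<^sup>2 * Re (qform M h)"
  using Re_cinner_hermitian_commute[OF assms, of x h]
  by (simp add: qform_add_vector qform_scale matrix_vector_mult_smult cinner_scale_left
      cinner_scale_right)

lemma quadratic_ratio_attains_min:
  fixes f g :: "complex^'n \<Rightarrow> real"
  assumes "continuous_on UNIV f" and "continuous_on UNIV g"
    and g_pos: "\<And>x. x \<noteq> 0 \<Longrightarrow> 0 < g x"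
    and f_scale: "\<And>c x. f (c *s x) = (cmod c)\<^sup>2 * f x"
    and g_scale: "\<And>c x. g (c *s x) = (cmod c)\<^sup>2 * g x"
  obtains u0 where "u0 \<noteq> 0" and "\<And>u. f u0 * g u \<le> f u * g u0"
proof -
  have "g x \<noteq> 0" if "x \<in> sphere 0 1" for x
    using g_pos[of x] that by (cases "x = 0") auto
  then have "continuous_on (sphere 0 1) (\<lambda>x. f x / g x)"
    using assms(1,2) by (intro continuous_on_divide) (auto intro: continuous_on_subset)
  moreover have "sphere (0 :: complex^'n) 1 \<noteq> {}"
    by simp
  ultimately obtain u0 where u0: "u0 \<in> sphere 0 1"
    and min: "\<forall>u \<in> sphere 0 1. f u0 / g u0 \<le> f u / g u"
    using continuous_attains_inf[OF compact_sphere] by blast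
  have u0_nz: "u0 \<noteq> 0"
    using u0 by auto
  have "f u0 * g u \<le> f u * g u0" for u
  proof (cases "u = 0")
    case True
    then show ?thesis
      using f_scale[of 0 0] g_scale[of 0 0] by simp
  next
    case False
    define k where "k = 1 / norm u"
    have "f u0 / g u0 \<le> f (of_real k *s u) / g (of_real k *s u)"
      using min norm_normalize[OF False] by (simp add: k_def)
    also have "\<dots> = f u / g u"
      using False by (simp add: k_def f_scale g_scale)
    finally show ?thesis
      using g_pos[OF False] g_pos[OF u0_nz] by (simp add: field_simps)
  qed
  then show thesis
    using u0_nz that by blast
qed

lemma eigenvector_of_square_eigenvector:
  fixes T :: "complex^'n^'n"
  assumes "u \<noteq> 0" and sq: "T *v (T *v u) = of_real (\<sigma>\<^sup>2) *s u"
  obtains \<mu> y where "y \<noteq> 0" and "T *v y = of_real \<mu> *s y" and "\<mu>\<^sup>2 = \<sigma>\<^sup>2"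
proof (cases "T *v u + of_real \<sigma> *s u = 0")
  case True
  then have "T *v u = of_real (- \<sigma>) *s u"
    by (simp add: add_eq_0_iff vector_smult_lneg)
  then show thesis
    using that[of u "- \<sigma>"] assms(1) by simp
next
  case False
  have "T *v (T *v u + of_real \<sigma> *s u) = of_real \<sigma> *s (T *v u + of_real \<sigma> *s u)"
    using sq by (simp add: matrix_vector_right_distrib matrix_vector_mult_smult vector_add_ldistrib
        vector_smult_assoc power2_eq_square add.commute)
  then show thesis
    using that False by blast
qed

context
  fixes P :: "complex^'n^'n" and g :: real
  assumes hP: "hermitian P" and g: "0 < g" and P_pos: "\<And>y. g * (norm y)\<^sup>2 \<le> Re (qform P y)"
begin

lemma pos_def_form_nonneg: "0 \<le> Re (qform P y)"
  using P_pos[of y] g by (metis order_trans mult_nonneg_nonneg less_imp_le zero_le_power2)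

lemma pos_def_form_pos: "y \<noteq> 0 \<Longrightarrow> 0 < Re (qform P y)"
  using P_pos[of y] g by (metis order_less_le_trans mult_pos_pos zero_less_norm_iff zero_less_power)

lemma pos_def_right_inverse:
  obtains N where "P ** N = mat 1"
proof -
  have "P *v y = 0 \<Longrightarrow> y = 0" for y
    using pos_def_form_pos[of y] by (auto simp: qform_eq_cinner)
  then show thesis
    using that matrix_left_invertible_ker matrix_left_right_inverse by metis
qed

lemma pos_def_norm_bound: "g * Re (qform P v) \<le> (norm (P *v v))\<^sup>2"
proof (cases "v = 0")
  case False
  have Q: "Re (qform P v) \<le> norm v * norm (P *v v)"
    unfolding qform_eq_cinner using complex_Re_le_cmod cinner_Cauchy_Schwarz order_trans by blast
  then have "(g * norm v) * norm v \<le> norm (P *v v) * norm v"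
    using P_pos[of v] by (simp add: power2_eq_square mult_ac)
  then have gv: "g * norm v \<le> norm (P *v v)"
    using False by (simp add: mult_le_cancel_right)
  have "g * Re (qform P v) \<le> (g * norm v) * norm (P *v v)"
    using Q g by (simp add: mult.assoc)
  also have "\<dots> \<le> norm (P *v v) * norm (P *v v)"
    using gv by (simp add: mult_right_mono)
  finally show ?thesis
    by (simp add: power2_eq_square)
qed (simp add: qform_eq_cinner)

lemma stationary_ratio_square:
  assumes hM: "hermitian M" and PT: "P ** T = M"
    and min: "\<And>u. \<sigma> * Re (qform P u) \<le> Re (qform P (T *v u))"
    and attained: "Re (qform P (T *v u0)) = \<sigma> * Re (qform P u0)"
  shows "T *v (T *v u0) = of_real \<sigma> *s u0"
proof -
  have P_T: "P *v (T *v x) = M *v x" for x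
    using PT by (simp add: matrix_vector_mul_assoc)
  define d where "d = T *v (T *v u0) - of_real \<sigma> *s u0"
  \<comment> \<open>\<open>T\<close> is self-adjoint for \<open>\<langle>x, P y\<rangle>\<close>, so the first variation
    of the quotient in direction \<open>h\<close> is \<open>2 Re \<langle>h, P d\<rangle>\<close>\<close>
  have "Re (cinner h (P *v d)) = 0" for h
  proof -
    let ?c1 = "2 * Re (cinner (T *v h) (P *v (T *v u0))) - \<sigma> * (2 * Re (cinner h (P *v u0)))"
    let ?c2 = "Re (qform P (T *v h)) - \<sigma> * Re (qform P h)"
    have "0 \<le> ?c1 * t + ?c2 * t\<^sup>2 + 0 * t ^ 3 + 0 * t ^ 4" for t
      using min[of "u0 + of_real t *s h"] attained
      by (simp add: Re_qform_add_scaled[OF hP] matrix_vector_right_distrib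
          matrix_vector_mult_smult algebra_simps)
    then have "?c1 = 0"
      by (rule quartic_nonneg_low_coeffs)
    moreover have "cinner (T *v h) (P *v (T *v u0)) = cinner (P *v (T *v h)) (T *v u0)"
      by (rule hermitian_cinner[OF hP])
    also have "\<dots> = cinner h (M *v (T *v u0))"
      by (simp add: P_T hermitian_cinner[OF hM])
    also have "\<dots> = cinner h (P *v (T *v (T *v u0)))"
      by (simp only: P_T)
    ultimately show ?thesis
      by (simp add: d_def matrix_vector_mult_diff_distrib matrix_vector_mult_smult
          cinner_diff_right cinner_scale_right)
  qed
  from this[of d] have "d = 0"
    using pos_def_form_pos[of d] by (auto simp: qform_eq_cinner)
  then show ?thesis
    by (simp add: d_def)
qed

lemma pos_def_rayleigh_minimum:
  assumes hM: "hermitian M" and PT: "P ** T = M"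
  obtains \<sigma> u0 where "u0 \<noteq> 0" and "0 \<le> \<sigma>" and "T *v (T *v u0) = of_real \<sigma> *s u0"
    and "\<And>u. \<sigma> * Re (qform P u) \<le> Re (qform P (T *v u))"
proof -
  let ?Q = "\<lambda>u. Re (qform P u)"
  have cont: "continuous_on UNIV (\<lambda>u. ?Q (T *v u))" "continuous_on UNIV ?Q"
    by (intro continuous_intros)+
  obtain u0 where u0: "u0 \<noteq> 0" and min0: "\<And>u. ?Q (T *v u0) * ?Q u \<le> ?Q (T *v u) * ?Q u0"
    using quadratic_ratio_attains_min[OF cont pos_def_form_pos]
    by (auto simp: qform_scale matrix_vector_mult_smult)
  define \<sigma> where "\<sigma> = ?Q (T *v u0) / ?Q u0"
  have min: "\<sigma> * ?Q u \<le> ?Q (T *v u)" for u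
    using min0[of u] pos_def_form_pos[OF u0] by (simp add: \<sigma>_def field_simps)
  have "?Q (T *v u0) = \<sigma> * ?Q u0"
    using pos_def_form_pos[OF u0] by (simp add: \<sigma>_def)
  then have "T *v (T *v u0) = of_real \<sigma> *s u0"
    by (rule stationary_ratio_square[OF hM PT min])
  moreover have "0 \<le> \<sigma>"
    using pos_def_form_pos[OF u0] pos_def_form_nonneg[of "T *v u0"] by (simp add: \<sigma>_def)
  ultimately show thesis
    using that u0 min by blast
qed

lemma pos_def_pencil_eigenvalue:
  assumes hM: "hermitian M"
  obtains \<mu> y where "y \<noteq> 0" and "M *v y = of_real \<mu> *s (P *v y)"
    and "\<And>u. g * \<bar>\<mu>\<bar> * norm u \<le> norm (M *v u)"
proof -
  obtain N where "P ** N = mat 1"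
    by (rule pos_def_right_inverse)
  define T where "T = N ** M"
  have PT: "P ** T = M"
    by (simp add: T_def matrix_mul_assoc \<open>P ** N = mat 1\<close>)
  then have P_T: "P *v (T *v x) = M *v x" for x
    by (simp add: matrix_vector_mul_assoc)
  obtain \<sigma> u0 where "u0 \<noteq> 0" and "0 \<le> \<sigma>" and "T *v (T *v u0) = of_real ((sqrt \<sigma>)\<^sup>2) *s u0"
    and min: "\<And>u. \<sigma> * Re (qform P u) \<le> Re (qform P (T *v u))"
    using pos_def_rayleigh_minimum[OF hM PT] by (metis real_sqrt_pow2)
  then obtain \<mu> y where y: "y \<noteq> 0" and Ty: "T *v y = of_real \<mu> *s y" and \<mu>: "\<mu>\<^sup>2 = \<sigma>"
    using eigenvector_of_square_eigenvector by (metis real_sqrt_pow2)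
  show thesis
  proof
    show "y \<noteq> 0"
      by (fact y)
    show "M *v y = of_real \<mu> *s (P *v y)"
      using P_T[of y] by (simp add: Ty matrix_vector_mult_smult)
  next
    fix u :: "complex^'n"
    have "(g * \<bar>\<mu>\<bar> * norm u)\<^sup>2 = g * \<sigma> * (g * (norm u)\<^sup>2)"
      by (simp add: \<mu>[symmetric] power_mult_distrib power2_eq_square)
    also have "\<dots> \<le> g * \<sigma> * Re (qform P u)"
      using P_pos g \<open>0 \<le> \<sigma>\<close> by (intro mult_left_mono) auto
    also have "\<dots> \<le> g * Re (qform P (T *v u))"
      using min[of u] g by (simp add: mult.assoc)
    also have "\<dots> \<le> (norm (M *v u))\<^sup>2"
      using pos_def_norm_bound[of "T *v u"] by (simp add: P_T)
    finally show "g * \<bar>\<mu>\<bar> * norm u \<le> norm (M *v u)"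
      by (rule power2_le_imp_le) simp
  qed
qed

end

section \<open>Chordal distance to the spectrum of a definite pencil\<close>

context
  fixes A B :: "complex^'n^'n" and lam :: "'n \<Rightarrow> real"
  assumes eig: "\<forall>z. det (A - mat z ** B) = det B * (\<Prod>i\<in>UNIV. complex_of_real (lam i) - z)"
begin

lemma pencil_eigenvector:
  obtains y where "norm y = 1" and "A *v y = of_real (lam i) *s (B *v y)"
proof -
  have "det (A - mat (of_real (lam i)) ** B) = 0"
    using eig by (auto intro: prod_zero[of UNIV])
  then obtain y where "y \<noteq> 0" and "A *v y = of_real (lam i) *s (B *v y)"
    by (auto simp: det_eq_0_iff_kernel pencil_residual)
  then show thesis
    using that[of "of_real (1 / norm y) *s y"] norm_normalize[OF \<open>y \<noteq> 0\<close>]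
    by (simp add: matrix_vector_mult_smult vector_smult_assoc mult.commute)
qed

lemma pencil_eigenvalue:
  assumes "det B \<noteq> 0" and "y \<noteq> 0" and "A *v y = of_real l *s (B *v y)"
  obtains i where "lam i = l"
proof -
  have "det (A - mat (of_real l) ** B) = 0"
    using assms(2,3) by (auto simp: det_eq_0_iff_kernel pencil_residual)
  then have "(\<Prod>i\<in>UNIV. complex_of_real (lam i) - of_real l) = 0"
    using eig assms(1) by simp
  then show thesis
    using that by auto
qed

lemma rotated_pencil_chordal_bound:
  assumes detB: "det B \<noteq> 0" and sc: "s\<^sup>2 + c\<^sup>2 = 1" and "y \<noteq> 0"
    and eq: "(A - mat (of_real z) ** B) *v y
      = of_real \<mu> *s ((mat (of_real s) ** A + mat (of_real c) ** B) *v y)"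
  obtains i where "\<bar>lam i - z\<bar> \<le> \<bar>\<mu>\<bar> * sqrt (1 + (lam i)\<^sup>2)"
proof -
  have By: "B *v y \<noteq> 0"
    using detB \<open>y \<noteq> 0\<close> det_eq_0_iff_kernel by blast
  have pencil: "of_real (1 - \<mu> * s) *s (A *v y) = of_real (z + \<mu> * c) *s (B *v y)"
    using eq by (simp add: pencil_residual matrix_vector_mult_add_rdistrib mat_matrix_vector_mult
        vec_eq_iff algebra_simps)
  show thesis
  proof (cases "1 - \<mu> * s = 0")
    case False
    define l where "l = (z + \<mu> * c) / (1 - \<mu> * s)"
    have k: "of_real (1 / (1 - \<mu> * s)) * of_real (1 - \<mu> * s) = (1 :: complex)"
      using False by (simp flip: of_real_mult)
    have "A *v y = of_real (1 / (1 - \<mu> * s)) *s (of_real (1 - \<mu> * s) *s (A *v y))"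
      by (simp only: vector_smult_assoc k vector_smult_lid)
    also have "\<dots> = of_real l *s (B *v y)"
      by (simp only: pencil vector_smult_assoc l_def flip: of_real_mult) simp
    finally have "A *v y = of_real l *s (B *v y)" .
    then obtain i where i: "lam i = l"
      using pencil_eigenvalue[OF detB \<open>y \<noteq> 0\<close>] by blast
    have "\<bar>lam i - z\<bar> = \<bar>\<mu>\<bar> * \<bar>s * lam i + c * 1\<bar>"
      using False by (simp add: i l_def field_simps abs_mult[symmetric])
    also have "\<dots> \<le> \<bar>\<mu>\<bar> * sqrt (1 + (lam i)\<^sup>2)"
      using Cauchy_Schwarz_pair[of s "lam i" c 1] sc by (intro mult_left_mono) (auto simp: add.commute)
    finally show thesis
      by (rule that)
  next
    case True
    \<comment> \<open>then \<open>\<mu> s = 1\<close> and \<open>\<mu> c = -z\<close>, so \<open>\<bar>\<mu>\<bar> = sqrt (1 + z\<^sup>2)\<close>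
      and every eigenvalue will do\<close>
    have "0 = of_real (z + \<mu> * c) *s (B *v y)"
      using pencil unfolding True of_real_0 vector_smult_lzero .
    then have "z + \<mu> * c = 0"
      using By unfolding eq_commute[of 0] vector_mul_eq_0 of_real_eq_0_iff by blast
    have "\<mu>\<^sup>2 = (\<mu> * s)\<^sup>2 + (\<mu> * c)\<^sup>2"
      using sc by (simp add: power_mult_distrib flip: distrib_left)
    also have "\<dots> = 1 + z\<^sup>2"
      using True \<open>z + \<mu> * c = 0\<close> by (simp add: eq_neg_iff_add_eq_0[symmetric] add.commute)
    finally have "\<mu>\<^sup>2 = 1 + z\<^sup>2" .
    then have "sqrt (1 + z\<^sup>2) = \<bar>\<mu>\<bar>"
      by (metis real_sqrt_abs)
    then have "\<bar>lam i - z\<bar> \<le> \<bar>\<mu>\<bar> * sqrt (1 + (lam i)\<^sup>2)" for i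
      using Cauchy_Schwarz_pair[of "lam i" 1 1 "- z"] by (simp add: add.commute mult.commute)
    then show thesis
      using that by blast
  qed
qed

lemma definite_pencil_chordal_residual:
  assumes hA: "hermitian A" and hB: "hermitian B" and pos: "0 < crawford A B"
    and detB: "det B \<noteq> 0"
  obtains i where "\<And>u. crawford A B * \<bar>lam i - z\<bar> * norm u
    \<le> sqrt (1 + (lam i)\<^sup>2) * norm ((A - mat (of_real z) ** B) *v u)"
proof -
  obtain s c where sc: "s\<^sup>2 + c\<^sup>2 = 1"
    and P_pos: "\<And>y. crawford A B * (norm y)\<^sup>2 \<le> Re (qform (mat (of_real s) ** A + mat (of_real c) ** B) y)"
    using definite_pencil_rotation[OF hA hB pos] by blast
  let ?P = "mat (of_real s) ** A + mat (of_real c) ** B" and ?M = "A - mat (of_real z) ** B"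
  have "hermitian ?P" and "hermitian ?M"
    by (intro hermitian_add hermitian_diff hermitian_mat_of_real_mult hA hB)+
  then obtain \<mu> y where "y \<noteq> 0" and eq: "?M *v y = of_real \<mu> *s (?P *v y)"
    and bound: "\<And>u. crawford A B * \<bar>\<mu>\<bar> * norm u \<le> norm (?M *v u)"
    using pos_def_pencil_eigenvalue[OF \<open>hermitian ?P\<close> pos P_pos \<open>hermitian ?M\<close>] by blast
  obtain i where i: "\<bar>lam i - z\<bar> \<le> \<bar>\<mu>\<bar> * sqrt (1 + (lam i)\<^sup>2)"
    using rotated_pencil_chordal_bound[OF detB sc \<open>y \<noteq> 0\<close> eq] by blast
  have "crawford A B * \<bar>lam i - z\<bar> * norm u \<le> sqrt (1 + (lam i)\<^sup>2) * norm (?M *v u)" for u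
  proof -
    have "crawford A B * \<bar>lam i - z\<bar> * norm u
        \<le> crawford A B * (\<bar>\<mu>\<bar> * sqrt (1 + (lam i)\<^sup>2)) * norm u"
      using i pos by (intro mult_right_mono mult_left_mono) auto
    also have "\<dots> = sqrt (1 + (lam i)\<^sup>2) * (crawford A B * \<bar>\<mu>\<bar> * norm u)"
      by simp
    also have "\<dots> \<le> sqrt (1 + (lam i)\<^sup>2) * norm (?M *v u)"
      using bound by (intro mult_left_mono) auto
    finally show ?thesis .
  qed
  then show thesis
    by (rule that)
qed

end

section \<open>Hermitian matrices with a prescribed image\<close>

text \<open>The Householder reflection \<open>I - 2 d d\<^sup>H / (d\<^sup>H d)\<close>; for \<open>d = 0\<close> the division by zero
  makes it the identity, which is what \<open>reflector_swap\<close> needs when \<open>y = v\<close>.\<close>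

definition reflector :: "complex^'n \<Rightarrow> complex^'n^'n" where
  "reflector d = (\<chi> i j. (if i = j then 1 else 0) - 2 * d $ i * cnj (d $ j) / cinner d d)"

lemma reflector_apply: "reflector d *v x = x - (2 * cinner d x / cinner d d) *s d"
proof -
  have "(reflector d *v x) $ i = x $ i - (2 * cinner d x / cinner d d) * d $ i" for i
  proof -
    have "(reflector d *v x) $ i = (\<Sum>j\<in>UNIV. (if i = j then 1 else 0) * x $ j)
        - (\<Sum>j\<in>UNIV. 2 * d $ i * cnj (d $ j) / cinner d d * x $ j)"
      unfolding reflector_def matrix_vector_mult_def by (simp add: left_diff_distrib sum_subtractf)
    also have "\<dots> = x $ i - (2 * cinner d x / cinner d d) * d $ i"
      by (simp add: if_distrib[of "\<lambda>a. a * _"] if_distrib[of "\<lambda>a. _ * a"] cinner_def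
          sum_distrib_left sum_divide_distrib
          mult_ac cong: if_cong)
    finally show ?thesis .
  qed
  then show ?thesis
    by (simp add: vec_eq_iff)
qed

lemma hermitian_reflector: "hermitian (reflector d)"
  by (simp add: hermitian_iff_cnj reflector_def cnj_cinner mult.commute)

lemma norm_reflector_apply: "norm (reflector d *v x) = norm x"
proof (cases "d = 0")
  case False
  define r where "r = (norm d)\<^sup>2"
  have r: "cinner d d = of_real r" "r \<noteq> 0"
    using False by (simp_all add: r_def cinner_self)
  have "cinner (reflector d *v x) (reflector d *v x) = cinner x x"
    using r by (simp add: reflector_apply cinner_diff_left cinner_diff_right cinner_scale_left
        cinner_scale_right flip: cnj_cinner[of d x])
  then have "of_real ((norm (reflector d *v x))\<^sup>2) = (of_real ((norm x)\<^sup>2) :: complex)"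
    by (simp only: cinner_self)
  then show ?thesis
    by (metis of_real_eq_iff norm_ge_zero power2_eq_iff_nonneg)
qed (simp add: reflector_apply)

lemma reflector_swap:
  assumes "norm y = 1" and "norm v = 1" and real: "cinner y v \<in> \<real>"
  shows "reflector (y - v) *v y = v"
proof -
  obtain \<rho> where \<rho>: "cinner y v = of_real \<rho>"
    using real by (auto elim: Reals_cases)
  then have "cinner v y = of_real \<rho>"
    by (metis cnj_cinner complex_cnj_complex_of_real)
  moreover have "cinner y y = 1" and "cinner v v = 1"
    using assms by (simp_all add: cinner_self)
  ultimately have dy: "cinner (y - v) y = 1 - of_real \<rho>"
    and dd: "cinner (y - v) (y - v) = 2 - 2 * of_real \<rho>"
    using \<rho> by (simp_all add: cinner_diff_left cinner_diff_right)
  show ?thesis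
  proof (cases "\<rho> = 1")
    case True
    then have "y - v = 0"
      using dd by (simp add: cinner_self)
    then show ?thesis
      by (simp add: reflector_apply)
  next
    case False
    then have "2 * cinner (y - v) y / cinner (y - v) (y - v) = 1"
      by (simp add: dy dd field_simps)
    then show ?thesis
      by (simp add: reflector_apply)
  qed
qed

lemma hermitian_with_prescribed_image:
  assumes y: "norm y = 1" and real: "cinner y v \<in> \<real>"
  obtains E where "hermitian E" and "E *v y = v" and "norm2 E \<le> norm v"
proof -
  define u where "u = of_real (1 / norm v) *s v"
  define E where "E = mat (of_real (norm v)) ** reflector (y - u)"
  have "E *v y = v"
  proof (cases "v = 0")
    case False
    have "cinner y u \<in> \<real>"
      using real by (simp add: u_def cinner_scale_right)
    then have "reflector (y - u) *v y = u"
      using y norm_normalize[OF False] by (intro reflector_swap) (simp_all add: u_def)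
    then show ?thesis
      using False by (simp add: E_def mat_matrix_vector_mult u_def vector_smult_assoc flip: of_real_mult)
  qed (simp add: E_def mat_matrix_vector_mult)
  moreover have "norm2 E \<le> norm v"
    by (rule norm2_le) (simp add: E_def mat_matrix_vector_mult norm_vector_smult norm_reflector_apply)
  moreover have "hermitian E"
    unfolding E_def by (intro hermitian_mat_of_real_mult hermitian_reflector)
  ultimately show thesis
    using that by blast
qed

section \<open>Perturbed eigenpairs\<close>

lemma hermitian_pair_form_bound:
  assumes "hermitian E" and "hermitian F"
  shows "cmod (qform E u + \<i> * qform F u) \<le> sqrt ((norm2 E)\<^sup>2 + (norm2 F)\<^sup>2) * (norm u)\<^sup>2"
proof -
  obtain a b where a: "qform E u = of_real a" and b: "qform F u = of_real b"
    using qform_hermitian_real[OF assms(1)] qform_hermitian_real[OF assms(2)] by blast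
  have "\<bar>a\<bar> \<le> norm2 E * (norm u)\<^sup>2" and "\<bar>b\<bar> \<le> norm2 F * (norm u)\<^sup>2"
    using qform_norm2_bound[of E u] qform_norm2_bound[of F u] by (simp_all add: a b)
  then have "a\<^sup>2 \<le> (norm2 E * (norm u)\<^sup>2)\<^sup>2" and "b\<^sup>2 \<le> (norm2 F * (norm u)\<^sup>2)\<^sup>2"
    using power_mono[of "\<bar>a\<bar>" _ 2] power_mono[of "\<bar>b\<bar>" _ 2] by simp_all
  then have "a\<^sup>2 + b\<^sup>2 \<le> (sqrt ((norm2 E)\<^sup>2 + (norm2 F)\<^sup>2) * (norm u)\<^sup>2)\<^sup>2"
    by (simp add: power_mult_distrib distrib_right)
  then show ?thesis
    by (simp add: a b cmod_def real_le_lsqrt)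
qed

context
  fixes A B E F :: "complex^'n^'n" and u :: "complex^'n" and z :: complex
  assumes eq: "(A + E) *v u = z *s ((B + F) *v u)" and "u \<noteq> 0"
begin

lemma perturbed_eigenvalue_real:
  assumes hA: "hermitian A" and hB: "hermitian B" and hE: "hermitian E" and hF: "hermitian F"
    and small: "sqrt ((norm2 E)\<^sup>2 + (norm2 F)\<^sup>2) < crawford A B"
  shows "z = of_real (Re z)"
proof -
  have q: "qform (A + E) u = z * qform (B + F) u"
    by (simp add: qform_eq_cinner eq cinner_scale_right)
  have "qform (B + F) u \<noteq> 0"
  proof
    assume "qform (B + F) u = 0"
    then have "qform A u = - qform E u" and "qform B u = - qform F u"
      using q by (simp_all add: qform_add_matrix eq_neg_iff_add_eq_0)
    then have "qform (A + mat \<i> ** B) u = - (qform E u + \<i> * qform F u)"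
      by (simp add: qform_add_matrix qform_mat_mult)
    then have "cmod (qform (A + mat \<i> ** B) u) = cmod (qform E u + \<i> * qform F u)"
      by (simp only: norm_minus_cancel)
    then have "crawford A B * (norm u)\<^sup>2 \<le> sqrt ((norm2 E)\<^sup>2 + (norm2 F)\<^sup>2) * (norm u)\<^sup>2"
      using crawford_bound[of A B u] hermitian_pair_form_bound[OF hE hF, of u] by linarith
    then show False
      using small \<open>u \<noteq> 0\<close> by simp
  qed
  moreover obtain a b where "qform (A + E) u = of_real a" and "qform (B + F) u = of_real b"
    using qform_hermitian_real[OF hermitian_add[OF hA hE]] qform_hermitian_real[OF hermitian_add[OF hB hF]]
    by blast
  ultimately have "z = of_real (a / b)"
    using q by (simp add: field_simps)
  then show ?thesis
    by simp
qed

lemma perturbed_eigenvalue_abs_bound: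
  assumes E: "norm2 E \<le> e" and F: "norm2 F \<le> e"
  shows "cmod z * (sigma_min B - e) \<le> norm2 A + e"
proof -
  have "norm ((A + E) *v u) \<le> norm (A *v u) + norm (E *v u)"
    by (simp add: matrix_vector_mult_add_rdistrib norm_triangle_ineq)
  also have "\<dots> \<le> norm2 A * norm u + e * norm u"
    using norm2_bound[of A u] norm2_bound[of E u] mult_right_mono[OF E norm_ge_zero[of u]]
    by (intro add_mono) auto
  finally have AE: "norm ((A + E) *v u) \<le> (norm2 A + e) * norm u"
    by (simp add: distrib_right)
  have "sigma_min B * norm u - e * norm u \<le> norm (B *v u) - norm (F *v u)"
    using sigma_min_bound[of B u] norm2_bound[of F u] mult_right_mono[OF F norm_ge_zero[of u]]
    by linarith
  also have "\<dots> \<le> norm ((B + F) *v u)"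
    by (simp add: matrix_vector_mult_add_rdistrib norm_diff_ineq)
  finally have BF: "(sigma_min B - e) * norm u \<le> norm ((B + F) *v u)"
    by (simp add: left_diff_distrib)
  have "(cmod z * (sigma_min B - e)) * norm u \<le> cmod z * norm ((B + F) *v u)"
    using mult_left_mono[OF BF norm_ge_zero[of z]] by (simp add: mult.assoc)
  also have "\<dots> \<le> (norm2 A + e) * norm u"
    using AE by (simp add: eq norm_vector_smult)
  finally show ?thesis
    using \<open>u \<noteq> 0\<close> by (simp add: mult_right_le_imp_le)
qed

end

lemma perturbed_pencil_residual:
  assumes "(A + E) *v u = of_real x *s ((B + F) *v u)"
  shows "norm ((A - mat (of_real x) ** B) *v u)
    \<le> sqrt (1 + x\<^sup>2) * sqrt ((norm2 E)\<^sup>2 + (norm2 F)\<^sup>2) * norm u"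
proof -
  have "(A - mat (of_real x) ** B) *v u = of_real x *s (F *v u) - E *v u"
    using assms by (simp add: pencil_residual matrix_vector_mult_add_rdistrib vector_add_ldistrib
        mat_matrix_vector_mult algebra_simps)
  then have "norm ((A - mat (of_real x) ** B) *v u) \<le> \<bar>x\<bar> * norm (F *v u) + norm (E *v u)"
    using norm_triangle_ineq4[of "of_real x *s (F *v u)" "E *v u"] by (simp add: norm_vector_smult)
  also have "\<dots> \<le> (\<bar>x\<bar> * norm2 F + 1 * norm2 E) * norm u"
    using norm2_bound[of F u] norm2_bound[of E u] mult_left_mono[OF norm2_bound[of F u] abs_ge_zero[of x]]
    by (simp add: distrib_right mult.assoc)
  also have "\<dots> \<le> sqrt (1 + x\<^sup>2) * sqrt ((norm2 E)\<^sup>2 + (norm2 F)\<^sup>2) * norm u"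
    using Cauchy_Schwarz_pair[of "\<bar>x\<bar>" "norm2 F" 1 "norm2 E"]
    by (intro mult_right_mono) (simp_all add: add.commute)
  finally show ?thesis .
qed

lemma sym_pseudospectrum_real_residual:
  assumes hA: "hermitian A" and hB: "hermitian B" and small: "eps < crawford A B"
    and "z \<in> sym_pseudospectrum eps A B"
  obtains x u where "z = of_real x" and "u \<noteq> 0"
    and "\<bar>x\<bar> * (sigma_min B - eps) \<le> norm2 A + eps"
    and "norm ((A - mat (of_real x) ** B) *v u) \<le> sqrt (1 + x\<^sup>2) * eps * norm u"
proof -
  obtain u E F where u: "u \<noteq> 0" and hE: "hermitian E" and hF: "hermitian F"
    and EF: "sqrt ((norm2 E)\<^sup>2 + (norm2 F)\<^sup>2) \<le> eps" and eq: "(A + E) *v u = z *s ((B + F) *v u)"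
    using assms(4) unfolding sym_pseudospectrum_def by blast
  define x where "x = Re z"
  have z: "z = of_real x"
    using perturbed_eigenvalue_real[OF eq u hA hB hE hF] EF small by (simp add: x_def)
  have "norm2 E \<le> eps" and "norm2 F \<le> eps"
    using EF real_sqrt_sum_squares_ge1[of "norm2 E" "norm2 F"]
      real_sqrt_sum_squares_ge2[of "norm2 F" "norm2 E"] by linarith+
  then have bound: "\<bar>x\<bar> * (sigma_min B - eps) \<le> norm2 A + eps"
    using perturbed_eigenvalue_abs_bound[OF eq u] by (simp add: z)
  have "norm ((A - mat (of_real x) ** B) *v u)
      \<le> sqrt (1 + x\<^sup>2) * sqrt ((norm2 E)\<^sup>2 + (norm2 F)\<^sup>2) * norm u"
    using eq by (simp add: z perturbed_pencil_residual)
  also have "\<dots> \<le> sqrt (1 + x\<^sup>2) * eps * norm u"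
    using EF by (intro mult_right_mono mult_left_mono) auto
  finally show thesis
    using that z u bound by blast
qed

context
  fixes A B :: "complex^'n^'n" and lam :: "'n \<Rightarrow> real"
  assumes hA: "hermitian A" and hB: "hermitian B"
    and eig: "\<forall>z. det (A - mat z ** B) = det B * (\<Prod>i\<in>UNIV. complex_of_real (lam i) - z)"
begin

lemma eigenvalue_abs_le: "\<bar>lam i\<bar> * sigma_min B \<le> norm2 A"
proof -
  obtain y where "norm y = 1" and "A *v y = of_real (lam i) *s (B *v y)"
    using pencil_eigenvector[OF eig] by blast
  then have "(A + 0) *v y = of_real (lam i) *s ((B + 0) *v y)" and "y \<noteq> 0"
    by auto
  from perturbed_eigenvalue_abs_bound[OF this, of 0] show ?thesis
    by simp
qed

lemma sym_pseudospectrum_subset_intervals: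
  assumes "0 < eps" and "eps < sigma_min B" and "eps < crawford A B"
  defines "R \<equiv> eps / crawford A B * (1 + ((norm2 A + eps) / (sigma_min B - eps))\<^sup>2)"
  shows "sym_pseudospectrum eps A B \<subseteq> (\<Union>i. complex_of_real ` {lam i - R <..< lam i + R})"
proof
  fix z
  assume "z \<in> sym_pseudospectrum eps A B"
  then obtain x u where z: "z = of_real x" and "u \<noteq> 0"
    and x: "\<bar>x\<bar> * (sigma_min B - eps) \<le> norm2 A + eps"
    and residual: "norm ((A - mat (of_real x) ** B) *v u) \<le> sqrt (1 + x\<^sup>2) * eps * norm u"
    using sym_pseudospectrum_real_residual[OF hA hB assms(3)] by blast
  define M where "M = (norm2 A + eps) / (sigma_min B - eps)"
  have pos: "0 < crawford A B" and "0 < sigma_min B - eps"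
    using assms(1-3) by simp_all
  then have "\<bar>x\<bar> \<le> M"
    using x by (simp add: M_def pos_le_divide_eq)
  have shrink: "\<bar>lam i\<bar> * (sigma_min B - eps) \<le> \<bar>lam i\<bar> * sigma_min B" for i
    using assms(1) by (simp add: right_diff_distrib)
  have "\<bar>lam i\<bar> * (sigma_min B - eps) < norm2 A + eps" for i
    using shrink[of i] eigenvalue_abs_le[of i] assms(1) by linarith
  then have lam: "\<bar>lam i\<bar> < M" for i
    using \<open>0 < sigma_min B - eps\<close> by (simp add: M_def pos_less_divide_eq)
  have "det B \<noteq> 0"
    using assms(1,2) by (intro sigma_min_pos_det_nonzero) simp
  then obtain i where chordal: "\<And>v. crawford A B * \<bar>lam i - x\<bar> * norm v
      \<le> sqrt (1 + (lam i)\<^sup>2) * norm ((A - mat (of_real x) ** B) *v v)"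
    using definite_pencil_chordal_residual[OF eig hA hB pos] by blast
  have "crawford A B * \<bar>lam i - x\<bar> * norm u
      \<le> sqrt (1 + (lam i)\<^sup>2) * (sqrt (1 + x\<^sup>2) * eps * norm u)"
    using chordal[of u] mult_left_mono[OF residual, of "sqrt (1 + (lam i)\<^sup>2)"] by simp
  then have "\<bar>lam i - x\<bar> \<le> eps / crawford A B * (sqrt (1 + (lam i)\<^sup>2) * sqrt (1 + x\<^sup>2))"
    using \<open>u \<noteq> 0\<close> pos by (simp add: field_simps)
  also have "\<dots> < R"
    unfolding R_def M_def[symmetric]
    using sqrt_one_plus_square_mult_less[OF lam \<open>\<bar>x\<bar> \<le> M\<close>] assms(1) pos
    by (intro mult_strict_left_mono) auto
  finally have "x \<in> {lam i - R <..< lam i + R}"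
    by auto
  then show "z \<in> (\<Union>i. complex_of_real ` {lam i - R <..< lam i + R})"
    using z by blast
qed

lemma intervals_subset_sym_pseudospectrum:
  defines "r \<equiv> \<lambda>i. if A = 0 then 1 / norm2 B else max (1 / norm2 B) (\<bar>lam i\<bar> / norm2 A)"
  shows "(\<Union>i. complex_of_real ` {lam i - eps * r i <..< lam i + eps * r i}) \<subseteq> sym_pseudospectrum eps A B"
proof clarify
  fix i x
  assume x: "x \<in> {lam i - eps * r i <..< lam i + eps * r i}"
  obtain y where y: "norm y = 1" and Ay: "A *v y = of_real (lam i) *s (B *v y)"
    using pencil_eigenvector[OF eig] by blast
  define v where "v = of_real (x - lam i) *s (B *v y)"
  \<comment> \<open>\<open>r i\<close> is designed so that \<open>r i * \<parallel>B y\<parallel> \<le> 1\<close>; the convention \<open>t / 0 = 0\<close>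
    covers a vanishing \<open>norm2 B\<close>\<close>
  have "norm (B *v y) / norm2 B \<le> 1" and "\<bar>lam i\<bar> * norm (B *v y) / norm2 A \<le> 1"
    using norm2_bound[of B y] norm2_bound[of A y] norm2_nonneg[of A] norm2_nonneg[of B] y
    by (auto simp: Ay norm_vector_smult divide_le_eq_1)
  then have rB: "r i * norm (B *v y) \<le> 1"
    by (auto simp: r_def max_def)
  have "0 \<le> r i"
    by (simp add: r_def norm2_nonneg le_max_iff_disj)
  moreover have "0 < eps * r i"
    using x by simp
  ultimately have "0 < eps"
    by (simp add: zero_less_mult_iff)
  have "norm v = \<bar>x - lam i\<bar> * norm (B *v y)"
    unfolding v_def norm_vector_smult norm_of_real ..
  also have "\<dots> \<le> eps * (r i * norm (B *v y))"
    using x by (simp add: mult.assoc[symmetric] mult_right_mono abs_less_iff less_imp_le)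
  also have "\<dots> \<le> eps"
    using rB \<open>0 < eps\<close> by (simp add: mult_left_le)
  finally have "norm v \<le> eps" .
  obtain b where "qform B y = of_real b"
    using qform_hermitian_real[OF hB] by blast
  then have "cinner y v = of_real (x - lam i) * of_real b"
    unfolding v_def cinner_scale_right qform_eq_cinner by simp
  then have "cinner y v \<in> \<real>"
    by simp
  then obtain E where hE: "hermitian E" and Ey: "E *v y = v" and "norm2 E \<le> norm v"
    using hermitian_with_prescribed_image[OF y] by blast
  then have "sqrt ((norm2 E)\<^sup>2 + (norm2 0)\<^sup>2) \<le> eps"
    using \<open>norm v \<le> eps\<close> norm2_nonneg[of E] by simp
  moreover have "(A + E) *v y = of_real x *s ((B + 0) *v y)"
    by (simp add: matrix_vector_mult_add_rdistrib Ay Ey v_def flip: vector_sadd_rdistrib of_real_add)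
  moreover have "y \<noteq> 0"
    using y by auto
  ultimately show "complex_of_real x \<in> sym_pseudospectrum eps A B"
    unfolding sym_pseudospectrum_def using hE hermitian_zero by blast
qed

end

theorem theorem2p6:
  fixes A B :: "complex^'n^'n" and lam :: "'n \<Rightarrow> real" and eps :: real
  assumes "definite_pencil A B"
    and eig: "\<forall>z. det (A - mat z ** B) = det B * (\<Prod>i\<in>UNIV. complex_of_real (lam i) - z)"
    and "0 < eps" and "eps < min (sigma_min B) (crawford A B)"
  shows "(let reps = eps / crawford A B * (1 + ((norm2 A + eps) / (sigma_min B - eps))\<^sup>2);
              r = (\<lambda>i. if A = 0 then 1 / norm2 B else max (1 / norm2 B) (\<bar>lam i\<bar> / norm2 A))
          in (\<Union>i. complex_of_real ` {lam i - eps * r i <..< lam i + eps * r i})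
               \<subseteq> sym_pseudospectrum eps A B
           \<and> sym_pseudospectrum eps A B
               \<subseteq> (\<Union>i. complex_of_real ` {lam i - reps <..< lam i + reps}))"
proof -
  have hA: "hermitian A" and hB: "hermitian B"
    using assms(1) by (simp_all add: definite_pencil_def)
  show ?thesis
    unfolding Let_def
    using intervals_subset_sym_pseudospectrum[OF hA hB eig]
      sym_pseudospectrum_subset_intervals[OF hA hB eig] assms(3,4)
    by simp
qed

end
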